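(* Let $(M,\cdot,1)$ be a monoid and $\Sigma$ a finite alphabet. Let $A1,\dots,An$ be $n\ge1$ minimal and transition-equalized $M$-DFAs, and for each $k$ let $(g_{Ak},f_{Ak})$ be the natural factorization on $L$ induced by $Ak$ (for some selection function). Let $(g,f)=(g_{A1},f_{A1})\ast(g_{A2},f_{A2})\ast\cdots\ast(g_{An},f_{An})$. Then $$\mathrm{RcgCap}^{(g,f)}_L\supseteq\bigcup_{k=1}^n\mathrm{RcgCap}^{(g_{Ak},f_{Ak})}_L.$$
   Context: $L$ is the set of all functions $\Sigma^*\to M$; $\varepsilon$ the empty word; $(m\cdot\ell)(\gamma)=m\cdot\ell(\gamma)$; $\Delta_\alpha(\ell)(\gamma)=\ell(\alpha\gamma)$. A factorization on $L$ is a pair $g:L\to M$, $f:L\to L$ with $g(\ell)\cdot f(\ell)=\ell$. The composition is $(g_1,f_1)\ast(g_2,f_2)=(g_1\cdot(g_2\circ f_1),f_2\circ f_1)$ with $(g\cdot g')(\ell)=g(\ell)\cdot g'(\ell)$ (associative). Define $S^{(g,f)}_\varepsilon=\mathrm{id}_L$, $S^{(g,f)}_{\alpha\sigma}=f\circ\Delta_\sigma\circ S^{(g,f)}_\alpha$. $\mathrm{RcgCap}^{(g,f)}_L$ is the set of $\ell\in L$ such that $\{S^{(g,f)}_\alpha(f(\ell))\mid\alpha\in\Sigma^*\}$ is finite (equivalently, the automaton $N^{(g,f)}(f(\ell),1)$ with these states is an $M$-DFA). An $M$-DFA is $A=(Q,\Sigma,u,i_u,\delta,w,\rho)$ with $Q$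 finite nonempty, initial state $u$, initial value $i_u\in M$, $\delta:Q\times\Sigma\to Q$, $w:Q\times\Sigma\to M$, $\rho:Q\to M$; with $q\alpha$ the extended transition and $w^*(q,\varepsilon)=1$, $w^*(q,\alpha\sigma)=w^*(q,\alpha)\cdot w(q\alpha,\sigma)$, $\mathcal{A}(\alpha)=i_u\cdot w^*(u,\alpha)\cdot\rho(u\alpha)$ is its language and $\mathcal{A}_q(\alpha)=w^*(q,\alpha)\cdot\rho(q\alpha)$. Minimal: no $M$-DFA with the same language has fewer states. Transition-equalized: $\Delta_\sigma(\mathcal{A}_q)=\Delta_\tau(\mathcal{A}_p)$ implies $\delta(q,\sigma)=\delta(p,\tau)$ and $w(q,\sigma)=w(p,\tau)$. Natural factorization induced by $A$: $P_A=\{((\sigma,q),\Delta_\sigma(\mathcal{A}_q))\mid\sigma\in\Sigma,q\in Q\}\cup\{((\varepsilon,u),\mathcal{A})\}$, with elements equivalent iff their language components are equal; a selection function $\pi$ chooses a representative per class, always $((\varepsilon,u),\mathcal{A})$ for its class. $f_A(\mathcal{A})=\mathcal{A}_u$, $g_A(\mathcal{A})=i_u$; if $\ell\neq\mathcal{A}$ is the language component of a class with representative $((\sigma,q),\Delta_\sigma(\mathcal{A}_q))$, then $f_A(\ell)=\mathcal{A}_{q\sigma}$, $g_A(\ell)=w(q,\sigma)$; otherwise $f_A(\ell)=\ell$, $g_A(\ell)=1$. *)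

theory Defs
  imports Main
begin

type_synonym ('a, 'm) lang = "'a list \<Rightarrow> 'm"

definition scal :: "'m::monoid_mult \<Rightarrow> ('a, 'm) lang \<Rightarrow> ('a, 'm) lang" where
  "scal m l = (\<lambda>\<gamma>. m * l \<gamma>)"

definition Delta :: "'a \<Rightarrow> ('a, 'm) lang \<Rightarrow> ('a, 'm) lang" where
  "Delta \<sigma> l = (\<lambda>\<gamma>. l (\<sigma> # \<gamma>))"

type_synonym ('a, 'm) fact = "(('a, 'm) lang \<Rightarrow> 'm) \<times> (('a, 'm) lang \<Rightarrow> ('a, 'm) lang)"

definition is_factorization :: "('a, 'm::monoid_mult) fact \<Rightarrow> bool" where
  "is_factorization gf \<longleftrightarrow> (\<forall>l. scal (fst gf l) (snd gf l) = l)"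

definition fact_comp :: "('a, 'm::monoid_mult) fact \<Rightarrow> ('a, 'm) fact \<Rightarrow> ('a, 'm) fact" where
  "fact_comp gf1 gf2 =
     ((\<lambda>l. fst gf1 l * fst gf2 (snd gf1 l)), snd gf2 \<circ> snd gf1)"

text \<open>Composition of a nonempty list of factorizations (composition is associative).\<close>
fun fact_comp_list :: "('a, 'm::monoid_mult) fact list \<Rightarrow> ('a, 'm) fact" where
  "fact_comp_list [] = (\<lambda>_. 1, id)"
| "fact_comp_list [x] = x"
| "fact_comp_list (x # xs) = fact_comp x (fact_comp_list xs)"

text \<open>S_eps = id, S_{\<alpha>\<sigma>} = f \<circ> \<Delta>_\<sigma> \<circ> S_\<alpha>.\<close>
definition S_op :: "('a, 'm) fact \<Rightarrow> 'a list \<Rightarrow> ('a, 'm) lang \<Rightarrow> ('a, 'm) lang" where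
  "S_op gf \<alpha> = foldl (\<lambda>h \<sigma>. snd gf \<circ> Delta \<sigma> \<circ> h) id \<alpha>"

definition RcgCap :: "('a, 'm) fact \<Rightarrow> ('a, 'm) lang set" where
  "RcgCap gf = {l. finite {S_op gf \<alpha> (snd gf l) | \<alpha>. True}}"

record ('q, 'a, 'm) mdfa =
  states :: "'q set"
  init :: 'q
  initval :: 'm
  delta :: "'q \<Rightarrow> 'a \<Rightarrow> 'q"
  wt :: "'q \<Rightarrow> 'a \<Rightarrow> 'm"
  rho :: "'q \<Rightarrow> 'm"

definition wf_mdfa :: "('q, 'a, 'm) mdfa \<Rightarrow> bool" where
  "wf_mdfa A \<longleftrightarrow> finite (states A) \<and> states A \<noteq> {} \<and> init A \<in> states A
     \<and> (\<forall>q\<in>states A. \<forall>\<sigma>. delta A q \<sigma> \<in> states A)"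

definition delta_star :: "('q, 'a, 'm) mdfa \<Rightarrow> 'q \<Rightarrow> 'a list \<Rightarrow> 'q" where
  "delta_star A q \<alpha> = foldl (delta A) q \<alpha>"

text \<open>w*(q,eps) = 1, w*(q,\<alpha>\<sigma>) = w*(q,\<alpha>) \<cdot> w(q\<alpha>,\<sigma>).\<close>
definition wstar :: "('q, 'a, 'm::monoid_mult) mdfa \<Rightarrow> 'q \<Rightarrow> 'a list \<Rightarrow> 'm" where
  "wstar A q \<alpha> = fst (foldl (\<lambda>(m, p) \<sigma>. (m * wt A p \<sigma>, delta A p \<sigma>)) (1, q) \<alpha>)"

definition lang_from :: "('q, 'a, 'm::monoid_mult) mdfa \<Rightarrow> 'q \<Rightarrow> ('a, 'm) lang" where
  "lang_from A q = (\<lambda>\<alpha>. wstar A q \<alpha> * rho A (delta_star A q \<alpha>))"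

definition lang :: "('q, 'a, 'm::monoid_mult) mdfa \<Rightarrow> ('a, 'm) lang" where
  "lang A = (\<lambda>\<alpha>. initval A * wstar A (init A) \<alpha> * rho A (delta_star A (init A) \<alpha>))"

text \<open>Minimality: no M-DFA with the same language has fewer states.  Competitors range over
  M-DFAs with states in nat, which covers every finite state set up to renaming.\<close>
definition minimal_mdfa :: "('q, 'a, 'm::monoid_mult) mdfa \<Rightarrow> bool" where
  "minimal_mdfa A \<longleftrightarrow>
     (\<forall>B :: (nat, 'a, 'm) mdfa. wf_mdfa B \<and> lang B = lang A \<longrightarrow> card (states A) \<le> card (states B))"

definition transition_equalized :: "('q, 'a, 'm::monoid_mult) mdfa \<Rightarrow> bool" where
  "transition_equalized A \<longleftrightarrow>
     (\<forall>q\<in>states A. \<forall>p\<in>states A. \<forall>\<sigma> \<tau>.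
        Delta \<sigma> (lang_from A q) = Delta \<tau> (lang_from A p) \<longrightarrow>
        delta A q \<sigma> = delta A p \<tau> \<and> wt A q \<sigma> = wt A p \<tau>)"

text \<open>P_A, with keys (Some \<sigma>, q) for (\<sigma>, q) and (None, u) for (eps, u).\<close>
definition P_set :: "('q, 'a, 'm::monoid_mult) mdfa \<Rightarrow> (('a option \<times> 'q) \<times> ('a, 'm) lang) set" where
  "P_set A = {((Some \<sigma>, q), Delta \<sigma> (lang_from A q)) | \<sigma> q. q \<in> states A}
             \<union> {((None, init A), lang A)}"

definition valid_selection ::
  "('q, 'a, 'm::monoid_mult) mdfa \<Rightarrow> (('a, 'm) lang \<Rightarrow> 'a option \<times> 'q) \<Rightarrow> bool" where
  "valid_selection A sel \<longleftrightarrow>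
     (\<forall>l \<in> snd ` P_set A. (sel l, l) \<in> P_set A) \<and> sel (lang A) = (None, init A)"

definition nat_fact ::
  "('q, 'a, 'm::monoid_mult) mdfa \<Rightarrow> (('a, 'm) lang \<Rightarrow> 'a option \<times> 'q) \<Rightarrow> ('a, 'm) fact" where
  "nat_fact A sel =
    ((\<lambda>l. if l = lang A then initval A
          else if l \<in> snd ` P_set A then
            (case sel l of (Some \<sigma>, q) \<Rightarrow> wt A q \<sigma> | (None, q) \<Rightarrow> 1)
          else 1),
     (\<lambda>l. if l = lang A then lang_from A (init A)
          else if l \<in> snd ` P_set A then
            (case sel l of (Some \<sigma>, q) \<Rightarrow> lang_from A (delta A q \<sigma>) | (None, q) \<Rightarrow> l)
          else l))"

end

theory Submission
  imports Defs
begin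

text \<open>
  The natural factorization of an automaton A moves only the languages in P_A, namely A itself
  and the languages Delta_sigma(A_q), and sends each of them to a state language A_p; every
  other language is left unchanged.  Let T be the finite set of state languages of A1, ..., An.
  The composite f therefore sends a language either into T or, if no factor moves it, to itself,
  and T is closed under Delta_sigma followed by f.  By induction on alpha, each S_alpha(f l) for
  (g, f) either lies in T or equals the corresponding element for (g_Ak, f_Ak), so the first
  orbit is contained in the union of T and the second.
\<close>

lemma snd_fact_comp_list: "snd (fact_comp_list fs) = fold snd fs"
  by (induction fs rule: fact_comp_list.induct) (auto simp: fact_comp_def)

lemma S_op_Nil [simp]: "S_op gf [] l = l"
  by (simp add: S_op_def)

lemma S_op_snoc [simp]: "S_op gf (\<alpha> @ [\<sigma>]) l = snd gf (Delta \<sigma> (S_op gf \<alpha> l))"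
  by (simp add: S_op_def)

locale absorbing_family =
  fixes I :: "'k set" and C :: "'k \<Rightarrow> 'x set" and f :: "'k \<Rightarrow> 'x \<Rightarrow> 'x" and T :: "'x set"
  assumes maps_into_target: "k \<in> I \<Longrightarrow> v \<in> C k \<Longrightarrow> f k v \<in> T"
    and fixes_outside: "k \<in> I \<Longrightarrow> v \<notin> C k \<Longrightarrow> f k v = v"
begin

lemma target_stable: "k \<in> I \<Longrightarrow> v \<in> T \<Longrightarrow> f k v \<in> T"
  by (cases "v \<in> C k") (simp_all add: maps_into_target fixes_outside)

lemma fold_target_stable: "set ks \<subseteq> I \<Longrightarrow> v \<in> T \<Longrightarrow> fold f ks v \<in> T"
  by (induction ks arbitrary: v) (simp_all add: target_stable)

lemma fold_absorbs:
  "set ks \<subseteq> I \<Longrightarrow> k \<in> set ks \<Longrightarrow> v \<in> C k \<Longrightarrow> fold f ks v \<in> T"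
proof (induction ks arbitrary: v)
  case (Cons j ks)
  show ?case
  proof (cases "v \<in> C j")
    case True
    with Cons.prems show ?thesis by (simp add: maps_into_target fold_target_stable)
  next
    case False
    with Cons show ?thesis by (auto simp: fixes_outside)
  qed
qed simp

lemma fold_fixes: "set ks \<subseteq> I \<Longrightarrow> (\<And>k. k \<in> set ks \<Longrightarrow> v \<notin> C k) \<Longrightarrow> fold f ks v = v"
  by (induction ks) (simp_all add: fixes_outside)

lemma fold_in_target_or_eq:
  assumes "set ks \<subseteq> I" and "k \<in> set ks"
  shows "fold f ks v \<in> T \<or> fold f ks v = f k v"
proof (cases "\<exists>j \<in> set ks. v \<in> C j")
  case True
  with assms(1) show ?thesis by (auto intro: fold_absorbs)
next
  case False
  with assms show ?thesis by (auto simp: fold_fixes fixes_outside)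
qed

end

locale Delta_absorbing_family = absorbing_family I C f T
  for I and C :: "'k \<Rightarrow> ('a, 'm) lang set" and f T +
  assumes Delta_target: "t \<in> T \<Longrightarrow> Delta \<sigma> t \<in> (\<Union>k\<in>I. C k)"
begin

lemma S_op_in_target_or_eq:
  assumes ks: "set ks = I" and k: "k \<in> I"
    and G: "snd G = fold f ks" and K: "snd K = f k"
  shows "S_op G \<alpha> (snd G l) \<in> T \<or> S_op G \<alpha> (snd G l) = S_op K \<alpha> (snd K l)"
proof (induction \<alpha> rule: rev_induct)
  case Nil
  from ks k show ?case by (simp add: G K fold_in_target_or_eq)
next
  case (snoc \<sigma> \<alpha>)
  show ?case
  proof (cases "S_op G \<alpha> (snd G l) \<in> T")
    case True
    then obtain j where "j \<in> set ks" "Delta \<sigma> (S_op G \<alpha> (snd G l)) \<in> C j"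
      using Delta_target ks by blast
    with ks show ?thesis by (simp add: G fold_absorbs)
  next
    case False
    with snoc.IH have "S_op G \<alpha> (snd G l) = S_op K \<alpha> (snd K l)" by blast
    with ks k show ?thesis by (simp add: G K fold_in_target_or_eq)
  qed
qed

lemma RcgCap_absorbed:
  assumes "finite T" and "set ks = I" and "k \<in> I"
    and "snd G = fold f ks" and "snd K = f k"
    and "l \<in> RcgCap K"
  shows "l \<in> RcgCap G"
proof -
  have "{S_op G \<alpha> (snd G l) | \<alpha>. True} \<subseteq> T \<union> {S_op K \<alpha> (snd K l) | \<alpha>. True}"
    using S_op_in_target_or_eq[OF assms(2-5)] by blast
  with assms(1,6) show ?thesis
    unfolding RcgCap_def by (auto intro: finite_subset)
qed

end

lemma Delta_lang_from_in_P_set: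
  "q \<in> states A \<Longrightarrow> Delta \<sigma> (lang_from A q) \<in> snd ` P_set A"
  unfolding P_set_def by (rule image_eqI[of _ _ "((Some \<sigma>, q), Delta \<sigma> (lang_from A q))"]) auto

lemma snd_nat_fact_outside_P_set:
  assumes "v \<notin> snd ` P_set A"
  shows "snd (nat_fact A sel) v = v"
proof -
  have "lang A \<in> snd ` P_set A" unfolding P_set_def by force
  with assms show ?thesis by (auto simp: nat_fact_def)
qed

lemma snd_nat_fact_in_states:
  assumes wf: "wf_mdfa A" and sel: "valid_selection A sel" and v: "v \<in> snd ` P_set A"
  shows "snd (nat_fact A sel) v \<in> lang_from A ` states A"
proof (cases "v = lang A")
  case True
  with wf show ?thesis by (auto simp: nat_fact_def wf_mdfa_def)
next
  case False
  have rep: "(sel v, v) \<in> P_set A"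
    using sel v by (auto simp: valid_selection_def)
  obtain a q where sel_v: "sel v = (a, q)" by fastforce
  show ?thesis
  proof (cases a)
    case None
    with rep sel_v False show ?thesis by (auto simp: P_set_def)
  next
    case (Some \<sigma>)
    with rep sel_v wf have "delta A q \<sigma> \<in> states A" by (auto simp: P_set_def wf_mdfa_def)
    with Some sel_v False v show ?thesis by (auto simp: nat_fact_def)
  qed
qed

lemma nat_fact_Delta_absorbing_family:
  assumes "\<And>k. k \<in> I \<Longrightarrow> wf_mdfa (As k)"
    and "\<And>k. k \<in> I \<Longrightarrow> valid_selection (As k) (sels k)"
  shows "Delta_absorbing_family I (\<lambda>k. snd ` P_set (As k))
           (\<lambda>k. snd (nat_fact (As k) (sels k))) (\<Union>k\<in>I. lang_from (As k) ` states (As k))"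
  using assms
  by unfold_locales
     (blast intro: snd_nat_fact_in_states snd_nat_fact_outside_P_set Delta_lang_from_in_P_set)+

theorem lemma7:
  fixes As :: "nat \<Rightarrow> ('q, 'a::finite, 'm::monoid_mult) mdfa"
    and sels :: "nat \<Rightarrow> (('a, 'm) lang \<Rightarrow> 'a option \<times> 'q)"
    and n :: nat
  assumes "n \<ge> 1"
    and "\<And>k. k \<in> {1..n} \<Longrightarrow> wf_mdfa (As k)"
    and "\<And>k. k \<in> {1..n} \<Longrightarrow> minimal_mdfa (As k)"
    and "\<And>k. k \<in> {1..n} \<Longrightarrow> transition_equalized (As k)"
    and "\<And>k. k \<in> {1..n} \<Longrightarrow> valid_selection (As k) (sels k)"
  shows "(\<Union>k\<in>{1..n}. RcgCap (nat_fact (As k) (sels k)))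
           \<subseteq> RcgCap (fact_comp_list (map (\<lambda>k. nat_fact (As k) (sels k)) [1..<n+1]))"
proof
  let ?T = "\<Union>k\<in>{1..n}. lang_from (As k) ` states (As k)"
  interpret Delta_absorbing_family "{1..n}" "\<lambda>k. snd ` P_set (As k)"
      "\<lambda>k. snd (nat_fact (As k) (sels k))" ?T
    using nat_fact_Delta_absorbing_family assms(2,5) by blast
  fix l
  assume "l \<in> (\<Union>k\<in>{1..n}. RcgCap (nat_fact (As k) (sels k)))"
  then obtain k where k: "k \<in> {1..n}" and l: "l \<in> RcgCap (nat_fact (As k) (sels k))"
    by blast
  have "finite ?T"
    using assms(2) by (auto simp: wf_mdfa_def)
  moreover have "set [1..<n+1] = {1..n}" by auto
  moreover have "snd (fact_comp_list (map (\<lambda>k. nat_fact (As k) (sels k)) [1..<n+1]))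
      = fold (\<lambda>k. snd (nat_fact (As k) (sels k))) [1..<n+1]"
    by (simp add: snd_fact_comp_list fold_map comp_def del: upt_Suc)
  ultimately show "l \<in> RcgCap (fact_comp_list (map (\<lambda>k. nat_fact (As k) (sels k)) [1..<n+1]))"
    using RcgCap_absorbed k refl l by blast
qed

end
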